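(* Let $S=K[x_1,\ldots,x_n]$ and $A\subseteq sm(S)_2$. Then (1) $A$ is upper perfect if and only if $\omega(\overline{\tau(A)})\le 2$, where $\overline{\tau(A)}$ is the complement graph of $\tau(A)$ and $\omega$ denotes the clique number; (2) $A$ is lower perfect if and only if for each $i\in[n]$, the degree of $v_i$ in $\overline{\tau(A)}$ is less than $n-1$.
   Context: $K$ is a field and $sm(S)_d$ is the set of square-free monomials of degree $d$ in $S$. For $A\subseteq sm(S)_2$: $A$ is upper perfect if $\{gx_i\mid g\in A,\ x_i\nmid g\}=sm(S)_3$, and lower perfect if $\{h\ne 1\mid h=g/x_i \text{ for some } g\in A,\ x_i\mid g\}=sm(S)_1$. $\tau(A)$ is the graph with vertex set $\{v_1,\ldots,v_n\}$ in which $v_iv_j$ is an edge if and only if $x_ix_j\in A$. *)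

theory Defs
  imports Main "HOL-Library.Multiset"
begin

text \<open>Monomials in S = K[x_1,...,x_n] are encoded as multisets of variable
indices (the exponent vector): the monomial x_{i_1}...x_{i_k} is the multiset
{#i_1,...,i_k#}. Multiplication is multiset sum, x_i divides g iff i is in g,
g/x_i is g minus one copy of i, and the monomial 1 is the empty multiset.
The field K plays no role in these purely combinatorial notions.\<close>

definition sm :: "nat \<Rightarrow> nat \<Rightarrow> nat multiset set" where
  "sm n d = {m. set_mset m \<subseteq> {1..n} \<and> (\<forall>i. count m i \<le> 1) \<and> size m = d}"

definition upper_perfect :: "nat \<Rightarrow> nat multiset set \<Rightarrow> bool" where
  "upper_perfect n A \<longleftrightarrow>
     {g + {#i#} | g i. g \<in> A \<and> i \<in> {1..n} \<and> i \<notin># g} = sm n 3"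

definition lower_perfect :: "nat \<Rightarrow> nat multiset set \<Rightarrow> bool" where
  "lower_perfect n A \<longleftrightarrow>
     {h. h \<noteq> {#} \<and> (\<exists>g\<in>A. \<exists>i\<in>{1..n}. i \<in># g \<and> h = g - {#i#})} = sm n 1"

definition tau :: "nat \<Rightarrow> nat multiset set \<Rightarrow> nat \<Rightarrow> nat \<Rightarrow> bool" where
  "tau n A i j \<longleftrightarrow> i \<in> {1..n} \<and> j \<in> {1..n} \<and> i \<noteq> j \<and> {#i, j#} \<in> A"

definition complement_graph :: "'v set \<Rightarrow> ('v \<Rightarrow> 'v \<Rightarrow> bool) \<Rightarrow> 'v \<Rightarrow> 'v \<Rightarrow> bool" where
  "complement_graph V E u v \<longleftrightarrow> u \<in> V \<and> v \<in> V \<and> u \<noteq> v \<and> \<not> E u v"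

definition is_clique :: "'v set \<Rightarrow> ('v \<Rightarrow> 'v \<Rightarrow> bool) \<Rightarrow> 'v set \<Rightarrow> bool" where
  "is_clique V E C \<longleftrightarrow> C \<subseteq> V \<and> (\<forall>x\<in>C. \<forall>y\<in>C. x \<noteq> y \<longrightarrow> E x y)"

definition clique_number :: "'v set \<Rightarrow> ('v \<Rightarrow> 'v \<Rightarrow> bool) \<Rightarrow> nat" where
  "clique_number V E = Max {card C | C. is_clique V E C}"

definition degree :: "'v set \<Rightarrow> ('v \<Rightarrow> 'v \<Rightarrow> bool) \<Rightarrow> 'v \<Rightarrow> nat" where
  "degree V E v = card {u \<in> V. E v u}"

end

theory Submission
  imports Defs
begin

text \<open>A square-free
  cubic x_a x_b x_c is a multiple g x_i of some g in A iff one of the three edges ab, ac, bc lies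
  in \<tau>(A); so A is upper perfect iff the complement of \<tau>(A) has no triangle, i.e. has clique
  number at most 2. Dually, x_i is a quotient g / x_k of some g in A iff v_i has a neighbour in
  \<tau>(A), i.e. iff v_i is not adjacent to all n - 1 other vertices in the complement.\<close>

lemma mem_sm_iff_mset_set:
  "m \<in> sm n d \<longleftrightarrow> (\<exists>S \<subseteq> {1..n}. card S = d \<and> m = mset_set S)"
proof
  assume m: "m \<in> sm n d"
  have m_eq: "m = mset_set (set_mset m)"
  proof (rule multiset_eqI)
    fix x
    have "count m x \<le> 1" using m by (simp add: sm_def)
    then show "count m x = count (mset_set (set_mset m)) x"
      using count_eq_zero_iff[of m x] by (auto simp: count_mset_set')
  qed
  then show "\<exists>S \<subseteq> {1..n}. card S = d \<and> m = mset_set S"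
  proof (intro exI conjI)
    show "card (set_mset m) = d" using m size_mset_set[of "set_mset m"] m_eq by (simp add: sm_def)
  qed (use m m_eq in \<open>auto simp: sm_def\<close>)
next
  assume "\<exists>S \<subseteq> {1..n}. card S = d \<and> m = mset_set S"
  then obtain S where S: "S \<subseteq> {1..n}" "card S = d" "m = mset_set S" by blast
  then have "finite S" by (simp add: finite_subset)
  with S show "m \<in> sm n d" by (auto simp: sm_def count_mset_set')
qed

lemma mem_sm_1: "m \<in> sm n 1 \<longleftrightarrow> (\<exists>a\<in>{1..n}. m = {#a#})"
  by (auto simp: mem_sm_iff_mset_set card_1_singleton_iff)

lemma mem_sm_2:
  "m \<in> sm n 2 \<longleftrightarrow> (\<exists>a\<in>{1..n}. \<exists>b\<in>{1..n}. a \<noteq> b \<and> m = {#a, b#})"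
proof
  assume "m \<in> sm n 2"
  then obtain a b where "{a, b} \<subseteq> {1..n}" "a \<noteq> b" "m = mset_set {a, b}"
    unfolding mem_sm_iff_mset_set card_2_iff by blast
  then show "\<exists>a\<in>{1..n}. \<exists>b\<in>{1..n}. a \<noteq> b \<and> m = {#a, b#}"
    by (intro bexI[of _ a] bexI[of _ b]) auto
next
  assume "\<exists>a\<in>{1..n}. \<exists>b\<in>{1..n}. a \<noteq> b \<and> m = {#a, b#}"
  then obtain a b where "{a, b} \<subseteq> {1..n}" "a \<noteq> b" "m = mset_set {a, b}" by auto
  then show "m \<in> sm n 2"
    unfolding mem_sm_iff_mset_set by (intro exI[of _ "{a, b}"]) auto
qed

lemma mem_sm_3:
  "m \<in> sm n 3 \<longleftrightarrow>
     (\<exists>a\<in>{1..n}. \<exists>b\<in>{1..n}. \<exists>c\<in>{1..n}. distinct [a, b, c] \<and> m = {#a, b, c#})"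
proof
  assume "m \<in> sm n 3"
  then obtain a b c where "{a, b, c} \<subseteq> {1..n}" "distinct [a, b, c]" "m = mset_set {a, b, c}"
    unfolding mem_sm_iff_mset_set card_3_iff by auto
  then show "\<exists>a\<in>{1..n}. \<exists>b\<in>{1..n}. \<exists>c\<in>{1..n}. distinct [a, b, c] \<and> m = {#a, b, c#}"
    by (intro bexI[of _ a] bexI[of _ b] bexI[of _ c]) auto
next
  assume "\<exists>a\<in>{1..n}. \<exists>b\<in>{1..n}. \<exists>c\<in>{1..n}. distinct [a, b, c] \<and> m = {#a, b, c#}"
  then obtain a b c where "{a, b, c} \<subseteq> {1..n}" "distinct [a, b, c]" "m = mset_set {a, b, c}"
    by auto
  then show "m \<in> sm n 3"
    unfolding mem_sm_iff_mset_set by (intro exI[of _ "{a, b, c}"]) auto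
qed

lemma triple_eq_add_mset_iff:
  assumes "distinct [a, b, c]"
  shows "{#a, b, c#} = add_mset i g \<longleftrightarrow>
           i = a \<and> g = {#b, c#} \<or> i = b \<and> g = {#a, c#} \<or> i = c \<and> g = {#a, b#}"
proof
  assume eq: "{#a, b, c#} = add_mset i g"
  then have "i \<in># {#a, b, c#}" by simp
  moreover have "g = {#a, b, c#} - {#i#}" using eq by simp
  ultimately show "i = a \<and> g = {#b, c#} \<or> i = b \<and> g = {#a, c#} \<or> i = c \<and> g = {#a, b#}"
    using assms by (auto simp: add_mset_commute)
qed (auto simp: add_mset_commute)

lemma sm_1_subset_iff: "sm n 1 \<subseteq> U \<longleftrightarrow> (\<forall>a\<in>{1..n}. {#a#} \<in> U)"
  unfolding subset_iff mem_sm_1 by blast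

lemma sm_3_subset_iff:
  "sm n 3 \<subseteq> U \<longleftrightarrow>
     (\<forall>a\<in>{1..n}. \<forall>b\<in>{1..n}. \<forall>c\<in>{1..n}. distinct [a, b, c] \<longrightarrow> {#a, b, c#} \<in> U)"
  unfolding subset_iff mem_sm_3 by blast

lemma upper_perfect_iff:
  assumes "A \<subseteq> sm n 2"
  shows "upper_perfect n A \<longleftrightarrow>
           (\<forall>a\<in>{1..n}. \<forall>b\<in>{1..n}. \<forall>c\<in>{1..n}.
              distinct [a, b, c] \<longrightarrow> {#a, b#} \<in> A \<or> {#a, c#} \<in> A \<or> {#b, c#} \<in> A)"
proof -
  let ?U = "{g + {#i#} | g i. g \<in> A \<and> i \<in> {1..n} \<and> i \<notin># g}"
  have "?U \<subseteq> sm n 3"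
  proof
    fix m assume "m \<in> ?U"
    then obtain g i where g: "g \<in> A" "i \<in> {1..n}" "i \<notin># g" "m = g + {#i#}" by blast
    then obtain a b where "a \<in> {1..n}" "b \<in> {1..n}" "a \<noteq> b" "g = {#a, b#}"
      using assms mem_sm_2 by blast
    with g show "m \<in> sm n 3"
      unfolding mem_sm_3 by (intro bexI[of _ a] bexI[of _ b] bexI[of _ i]) auto
  qed
  then have "upper_perfect n A \<longleftrightarrow> sm n 3 \<subseteq> ?U"
    unfolding upper_perfect_def by (simp only: set_eq_subset simp_thms)
  also have "\<dots> \<longleftrightarrow> (\<forall>a\<in>{1..n}. \<forall>b\<in>{1..n}. \<forall>c\<in>{1..n}.
              distinct [a, b, c] \<longrightarrow> {#a, b#} \<in> A \<or> {#a, c#} \<in> A \<or> {#b, c#} \<in> A)"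
    unfolding sm_3_subset_iff
  proof (intro ball_cong refl imp_cong)
    fix a b c assume "distinct [a, b, c]" "c \<in> {1..n}" "b \<in> {1..n}" "a \<in> {1..n}"
    then show "{#a, b, c#} \<in> ?U \<longleftrightarrow> {#a, b#} \<in> A \<or> {#a, c#} \<in> A \<or> {#b, c#} \<in> A"
      by (auto simp: triple_eq_add_mset_iff conj_disj_distribR ex_disj_distrib)
  qed
  finally show ?thesis .
qed

lemma lower_perfect_iff:
  assumes "A \<subseteq> sm n 2"
  shows "lower_perfect n A \<longleftrightarrow> (\<forall>i\<in>{1..n}. \<exists>j. {#i, j#} \<in> A)"
proof -
  let ?L = "{h. h \<noteq> {#} \<and> (\<exists>g\<in>A. \<exists>k\<in>{1..n}. k \<in># g \<and> h = g - {#k#})}"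
  have "?L \<subseteq> sm n 1"
  proof
    fix h assume "h \<in> ?L"
    then obtain g k where g: "g \<in> A" "k \<in># g" "h = g - {#k#}" by blast
    then obtain a b where "a \<in> {1..n}" "b \<in> {1..n}" "a \<noteq> b" "g = {#a, b#}"
      using assms mem_sm_2 by blast
    with g show "h \<in> sm n 1"
      unfolding mem_sm_1 by (auto simp: add_mset_commute)
  qed
  then have "lower_perfect n A \<longleftrightarrow> sm n 1 \<subseteq> ?L"
    unfolding lower_perfect_def by (simp only: set_eq_subset simp_thms)
  also have "\<dots> \<longleftrightarrow> (\<forall>i\<in>{1..n}. \<exists>j. {#i, j#} \<in> A)"
    unfolding sm_1_subset_iff
  proof (intro ball_cong refl iffI)
    fix i assume "{#i#} \<in> ?L"
    then obtain g k where "g \<in> A" "k \<in># g" "g - {#k#} = {#i#}" by auto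
    then show "\<exists>j. {#i, j#} \<in> A"
      by (auto simp: diff_single_eq_union add_mset_commute)
  next
    fix i assume "\<exists>j. {#i, j#} \<in> A"
    then obtain j where j: "{#i, j#} \<in> A" by blast
    then have "j \<in> {1..n}" using assms by (auto simp: sm_def)
    with j show "{#i#} \<in> ?L"
      by (auto simp: add_mset_commute intro!: bexI[of _ "{#i, j#}"] bexI[of _ j])
  qed
  finally show ?thesis .
qed

lemma is_clique_subset: "is_clique V E C \<Longrightarrow> D \<subseteq> C \<Longrightarrow> is_clique V E D"
  by (auto simp: is_clique_def)

lemma clique_number_le_iff:
  assumes "finite V"
  shows "clique_number V E \<le> k \<longleftrightarrow> (\<forall>C. is_clique V E C \<longrightarrow> card C \<le> k)"
proof -
  have "{card C | C. is_clique V E C} \<subseteq> card ` Pow V"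
    by (auto simp: is_clique_def)
  then have "finite {card C | C. is_clique V E C}"
    using assms finite_subset by blast
  moreover have "is_clique V E {}" by (simp add: is_clique_def)
  ultimately show ?thesis
    unfolding clique_number_def by (subst Max_le_iff) auto
qed

lemma clique_number_le_2_iff:
  assumes "finite V" and sym: "\<And>x y. E x y \<Longrightarrow> E y x"
  shows "clique_number V E \<le> 2 \<longleftrightarrow>
           \<not> (\<exists>a\<in>V. \<exists>b\<in>V. \<exists>c\<in>V. distinct [a, b, c] \<and> E a b \<and> E a c \<and> E b c)"
  unfolding clique_number_le_iff[OF assms(1)]
proof safe
  fix a b c assume "\<forall>C. is_clique V E C \<longrightarrow> card C \<le> 2"
    and "a \<in> V" "b \<in> V" "c \<in> V" "distinct [a, b, c]" "E a b" "E a c" "E b c"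
  moreover from this have "is_clique V E {a, b, c}"
    using sym unfolding is_clique_def by blast
  ultimately show False by fastforce
next
  fix C assume triangle_free:
    "\<not> (\<exists>a\<in>V. \<exists>b\<in>V. \<exists>c\<in>V. distinct [a, b, c] \<and> E a b \<and> E a c \<and> E b c)"
    and C: "is_clique V E C"
  show "card C \<le> 2"
  proof (rule ccontr)
    assume "\<not> card C \<le> 2"
    then obtain D where "D \<subseteq> C" "card D = 3"
      using obtain_subset_with_card_n[of 3 C] by force
    then obtain a b c where "D = {a, b, c}" "distinct [a, b, c]" "is_clique V E {a, b, c}"
      using C is_clique_subset unfolding card_3_iff by fastforce
    with triangle_free show False by (auto simp: is_clique_def)
  qed
qed

lemma degree_complement_graph_less_iff:
  assumes "finite V" "v \<in> V"
  shows "degree V (complement_graph V E) v < card V - 1 \<longleftrightarrow> (\<exists>u\<in>V. u \<noteq> v \<and> E v u)"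
proof -
  let ?N = "{u \<in> V. complement_graph V E v u}"
  have N: "?N = V - {v} - {u. E v u}"
    using assms(2) by (auto simp: complement_graph_def)
  have N_sub: "?N \<subseteq> V - {v}"
    unfolding N by blast
  have "degree V (complement_graph V E) v < card V - 1 \<longleftrightarrow> card ?N < card (V - {v})"
    using assms by (simp add: degree_def)
  also have "\<dots> \<longleftrightarrow> ?N \<subset> V - {v}"
    using assms(1) N_sub by (metis card_psubset finite_Diff psubset_card_mono)
  also have "\<dots> \<longleftrightarrow> (\<exists>u\<in>V. u \<noteq> v \<and> E v u)"
    unfolding N by auto
  finally show ?thesis .
qed

lemma tau_iff:
  assumes "A \<subseteq> sm n 2"
  shows "tau n A i j \<longleftrightarrow> {#i, j#} \<in> A"
proof
  assume ij: "{#i, j#} \<in> A"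
  then have "{#i, j#} \<in> sm n 2" using assms by blast
  with ij show "tau n A i j"
    unfolding tau_def sm_def by (auto dest: spec[of _ i])
qed (simp add: tau_def)

theorem proposition4p3:
  fixes n :: nat and A :: "nat multiset set"
  assumes "A \<subseteq> sm n 2"
  shows "(upper_perfect n A \<longleftrightarrow>
            clique_number {1..n} (complement_graph {1..n} (tau n A)) \<le> 2)
       \<and> (lower_perfect n A \<longleftrightarrow>
            (\<forall>i\<in>{1..n}. degree {1..n} (complement_graph {1..n} (tau n A)) i < n - 1))"
proof -
  let ?G = "complement_graph {1..n} (tau n A)"
  have G_iff: "?G a b \<longleftrightarrow> a \<in> {1..n} \<and> b \<in> {1..n} \<and> a \<noteq> b \<and> {#a, b#} \<notin> A" for a b
    by (simp add: complement_graph_def tau_iff[OF assms])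
  have "?G a b \<Longrightarrow> ?G b a" for a b
    unfolding G_iff by (auto simp: add_mset_commute)
  then have "clique_number {1..n} ?G \<le> 2 \<longleftrightarrow>
      \<not> (\<exists>a\<in>{1..n}. \<exists>b\<in>{1..n}. \<exists>c\<in>{1..n}. distinct [a, b, c] \<and> ?G a b \<and> ?G a c \<and> ?G b c)"
    by (rule clique_number_le_2_iff[OF finite_atLeastAtMost])
  then have upper: "upper_perfect n A \<longleftrightarrow> clique_number {1..n} ?G \<le> 2"
    unfolding upper_perfect_iff[OF assms] G_iff by auto
  have "(\<exists>j. {#i, j#} \<in> A) \<longleftrightarrow> degree {1..n} ?G i < n - 1" if "i \<in> {1..n}" for i
  proof -
    have "(\<exists>j. {#i, j#} \<in> A) \<longleftrightarrow> (\<exists>j. tau n A i j)"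
      by (simp add: tau_iff[OF assms])
    also have "\<dots> \<longleftrightarrow> (\<exists>j\<in>{1..n}. j \<noteq> i \<and> tau n A i j)"
      by (auto simp: tau_def)
    finally show ?thesis
      using degree_complement_graph_less_iff[OF finite_atLeastAtMost that] by simp
  qed
  then have lower: "lower_perfect n A \<longleftrightarrow> (\<forall>i\<in>{1..n}. degree {1..n} ?G i < n - 1)"
    by (simp add: lower_perfect_iff[OF assms])
  from upper lower show ?thesis ..
qed

end
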